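(* Let $\sigma$ be a permutation of $\{1,\dots,n\}$ that avoids the pattern $321$, and let $U$ be its upper subsequence. Then there exist points $p_i=(x_i,y_i)$, $1\le i\le n$, with integer coordinates $x_i,y_i\in\{1,\dots,2n\}$, such that $x_i<x_j$ if and only if $i<j$, $y_i<y_j$ if and only if $\sigma_i<\sigma_j$, $x_i=y_i$ for every $i\in U$, and $y_i<x_i$ for every $i\notin U$ (that is, $\sigma$ is embedded order-isomorphically in the bottom-right triangle of a $2n\times 2n$ grid with its upper subsequence on the diagonal).
   Context: A permutation avoids $321$ if it has no indices $a<b<c$ with $\sigma_a>\sigma_b>\sigma_c$. Such a permutation can be partitioned into two increasing subsequences; the upper subsequence is chosen so that it lies above and to the left of the other (lower) subsequence in the plot $\{(i,\sigma_i)\}$ and is maximal with this property, i.e. it is the set of indices $i$ such that $\sigma_i>\sigma_j$ for all $j<i$ (the left-to-right maxima). *)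

theory Defs
  imports "HOL-Combinatorics.Permutations"
begin

text \<open>Permutations of {1..n} are functions sigma with sigma permutes {1..n}.\<close>

definition avoids_321 :: "nat \<Rightarrow> (nat \<Rightarrow> nat) \<Rightarrow> bool" where
  "avoids_321 n \<sigma> \<longleftrightarrow>
     \<not> (\<exists>a b c. 1 \<le> a \<and> a < b \<and> b < c \<and> c \<le> n \<and> \<sigma> a > \<sigma> b \<and> \<sigma> b > \<sigma> c)"

definition upper_subseq :: "nat \<Rightarrow> (nat \<Rightarrow> nat) \<Rightarrow> nat set" where
  "upper_subseq n \<sigma> = {i \<in> {1..n}. \<forall>j \<in> {1..n}. j < i \<longrightarrow> \<sigma> j < \<sigma> i}"

end

theory Submission
  imports Defs
begin

text \<open>
  Call the points outside the upper subsequence lower points. Place point \<open>i\<close> at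
  \<open>x\<^sub>i = i + a\<^sub>i\<close> and \<open>y\<^sub>i = \<sigma>\<^sub>i + b\<^sub>i\<close>, where \<open>a\<^sub>i\<close> counts the lower points lying below some
  point among the first \<open>i\<close>, and \<open>b\<^sub>i\<close> counts the lower points lying to the left of some
  upper point of value at most \<open>\<sigma>\<^sub>i\<close>. Both shifts are monotone, so the two orders are
  preserved. For an upper point \<open>i\<close>, \<open>a\<^sub>i\<close> counts the lower points below \<open>i\<close> and \<open>b\<^sub>i\<close> the
  lower points left of \<open>i\<close>; as the upper points left of \<open>i\<close> are exactly those below \<open>i\<close>,
  both coordinates equal
  \<open>1 + #{upper points left of i} + #{lower points left of i} + #{lower points below i}\<close>.
  For a lower point \<open>i\<close>, 321-avoidance forces every point below \<open>i\<close> to lie to its left,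
  so \<open>\<sigma>\<^sub>i \<le> i\<close>; moreover \<open>a\<^sub>i\<close> counts every lower point up to and including \<open>i\<close>, whereas
  \<open>b\<^sub>i\<close> counts only lower points strictly left of \<open>i\<close>. Hence \<open>y\<^sub>i < x\<^sub>i\<close>.
\<close>

lemma add_card_less_iff:
  fixes S :: "nat \<Rightarrow> 'a set"
  assumes "mono S" and "\<And>v. S v \<subseteq> F" and "finite F"
  shows "a + card (S a) < b + card (S b) \<longleftrightarrow> a < b"
proof -
  have card_le: "card (S a) \<le> card (S b)" if "a \<le> b" for a b
    using finite_subset[OF assms(2,3)] monoD[OF assms(1) that] by (rule card_mono)
  show ?thesis
    using card_le[of a b] card_le[of b a] by (cases "a < b") auto
qed

lemma card_permutes_Collect:
  assumes "\<sigma> permutes S"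
  shows "card {k \<in> S. P (\<sigma> k)} = card {v \<in> S. P v}"
  by (rule bij_betw_same_card, rule bij_betw_Collect[OF permutes_imp_bij[OF assms]]) simp

lemma card_interval_less:
  fixes i n :: nat
  assumes "i \<in> {1..n}"
  shows "card {k \<in> {1..n}. k < i} = i - 1"
proof -
  have "{k \<in> {1..n}. k < i} = {1..<i}"
    using assms by auto
  then show ?thesis
    by simp
qed

locale interval_permutation =
  fixes n :: nat and \<sigma> :: "nat \<Rightarrow> nat"
  assumes permutes: "\<sigma> permutes {1..n}"
begin

definition lower_points :: "nat set" where
  "lower_points = {1..n} - upper_subseq n \<sigma>"

definition lower_below_prefix :: "nat \<Rightarrow> nat set" where
  "lower_below_prefix i = {k \<in> lower_points. \<exists>j \<in> {1..n}. j \<le> i \<and> \<sigma> k < \<sigma> j}"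

definition lower_left_of_upper :: "nat \<Rightarrow> nat set" where
  "lower_left_of_upper v = {k \<in> lower_points. \<exists>u \<in> upper_subseq n \<sigma>. \<sigma> u \<le> v \<and> k < u}"

definition xcoord :: "nat \<Rightarrow> int" where
  "xcoord i = int (i + card (lower_below_prefix i))"

definition ycoord :: "nat \<Rightarrow> int" where
  "ycoord i = int (\<sigma> i + card (lower_left_of_upper (\<sigma> i)))"

lemma value_in_interval: "i \<in> {1..n} \<Longrightarrow> \<sigma> i \<in> {1..n}"
  using permutes permutes_in_image by metis

lemma card_less_value:
  assumes "i \<in> {1..n}"
  shows "card {k \<in> {1..n}. \<sigma> k < \<sigma> i} = \<sigma> i - 1"
proof -
  have "{v \<in> {1..n}. v < \<sigma> i} = {1..<\<sigma> i}"
    using value_in_interval[OF assms] by auto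
  then show ?thesis
    using card_permutes_Collect[OF permutes, of "\<lambda>v. v < \<sigma> i"] by simp
qed

lemma upper_subseqD:
  "i \<in> upper_subseq n \<sigma> \<Longrightarrow> j \<in> {1..n} \<Longrightarrow> j < i \<Longrightarrow> \<sigma> j < \<sigma> i"
  by (simp add: upper_subseq_def)

lemma upper_subseq_less_iff:
  assumes "u \<in> upper_subseq n \<sigma>" and "v \<in> upper_subseq n \<sigma>"
  shows "u < v \<longleftrightarrow> \<sigma> u < \<sigma> v"
proof -
  have "u \<in> {1..n}" and "v \<in> {1..n}"
    using assms by (auto simp: upper_subseq_def)
  then show ?thesis
    using upper_subseqD[OF assms(1), of v] upper_subseqD[OF assms(2), of u]
    by (metis less_asym linorder_neqE_nat)
qed

lemma lower_points_iff:
  "i \<in> lower_points \<longleftrightarrow> i \<in> {1..n} \<and> (\<exists>j \<in> {1..n}. j < i \<and> \<sigma> i < \<sigma> j)"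
proof -
  have "\<sigma> j \<noteq> \<sigma> i" if "j < i" for j
    using permutes_inj[OF permutes] that by (metis inj_eq less_irrefl)
  then have "\<not> \<sigma> j < \<sigma> i \<longleftrightarrow> \<sigma> i < \<sigma> j" if "j < i" for j
    using that by fastforce
  then show ?thesis
    by (auto simp: lower_points_def upper_subseq_def)
qed

lemma lower_points_subset: "lower_points \<subseteq> {1..n}"
  by (auto simp: lower_points_def)

lemma lower_below_prefix_subset: "lower_below_prefix i \<subseteq> {1..n}"
  using lower_points_subset by (auto simp: lower_below_prefix_def)

lemma lower_left_of_upper_subset: "lower_left_of_upper v \<subseteq> {1..n}"
  using lower_points_subset by (auto simp: lower_left_of_upper_def)

lemma mono_lower_below_prefix: "mono lower_below_prefix"
  unfolding lower_below_prefix_def by (rule monoI) (use order_trans in blast)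

lemma mono_lower_left_of_upper: "mono lower_left_of_upper"
  unfolding lower_left_of_upper_def by (rule monoI) (use order_trans in blast)

lemma xcoord_less_iff: "xcoord i < xcoord j \<longleftrightarrow> i < j"
  unfolding xcoord_def of_nat_less_iff
  by (rule add_card_less_iff[OF mono_lower_below_prefix lower_below_prefix_subset finite_atLeastAtMost])

lemma ycoord_less_iff: "ycoord i < ycoord j \<longleftrightarrow> \<sigma> i < \<sigma> j"
  unfolding ycoord_def of_nat_less_iff
  by (rule add_card_less_iff[OF mono_lower_left_of_upper lower_left_of_upper_subset finite_atLeastAtMost])

lemma coords_in_grid:
  assumes "i \<in> {1..n}"
  shows "xcoord i \<in> {1..2 * int n}" and "ycoord i \<in> {1..2 * int n}"
proof -
  have "card (lower_below_prefix i) \<le> n" "card (lower_left_of_upper (\<sigma> i)) \<le> n"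
    using card_mono[OF finite_atLeastAtMost lower_below_prefix_subset]
      card_mono[OF finite_atLeastAtMost lower_left_of_upper_subset] by simp_all
  then show "xcoord i \<in> {1..2 * int n}" and "ycoord i \<in> {1..2 * int n}"
    using assms value_in_interval[OF assms] by (auto simp: xcoord_def ycoord_def)
qed

lemma card_upper_lower_split:
  "card {k \<in> {1..n}. P k} = card {k \<in> upper_subseq n \<sigma>. P k} + card {k \<in> lower_points. P k}"
proof -
  have "{k \<in> {1..n}. P k} \<inter> upper_subseq n \<sigma> = {k \<in> upper_subseq n \<sigma>. P k}"
    and "{k \<in> {1..n}. P k} - upper_subseq n \<sigma> = {k \<in> lower_points. P k}"
    by (auto simp: upper_subseq_def lower_points_def)
  then show ?thesis
    using card_Int_Diff[of "{k \<in> {1..n}. P k}" "upper_subseq n \<sigma>"] by simp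
qed

lemma lower_below_prefix_upper:
  assumes "i \<in> upper_subseq n \<sigma>"
  shows "lower_below_prefix i = {k \<in> lower_points. \<sigma> k < \<sigma> i}"
proof -
  have "\<sigma> j \<le> \<sigma> i" if "j \<in> {1..n}" and "j \<le> i" for j
    using upper_subseqD[OF assms that(1)] that(2) by (cases "j = i") auto
  moreover have "i \<in> {1..n}"
    using assms by (simp add: upper_subseq_def)
  ultimately show ?thesis
    unfolding lower_below_prefix_def by (auto intro: order.strict_trans2)
qed

lemma lower_left_of_upper_upper:
  assumes "i \<in> upper_subseq n \<sigma>"
  shows "lower_left_of_upper (\<sigma> i) = {k \<in> lower_points. k < i}"
proof -
  have "i \<in> {1..n}"
    using assms by (simp add: upper_subseq_def)
  then have "\<not> i < u" if "u \<in> upper_subseq n \<sigma>" and "\<sigma> u \<le> \<sigma> i" for u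
    using upper_subseqD[OF that(1)] that(2) by (meson leD)
  then show ?thesis
    using assms unfolding lower_left_of_upper_def by (auto simp: not_less intro: order.strict_trans2)
qed

lemma upper_coords_eq:
  assumes "i \<in> upper_subseq n \<sigma>"
  shows "xcoord i = ycoord i"
proof -
  have i: "i \<in> {1..n}"
    using assms by (simp add: upper_subseq_def)
  have "{k \<in> upper_subseq n \<sigma>. k < i} = {k \<in> upper_subseq n \<sigma>. \<sigma> k < \<sigma> i}"
    using upper_subseq_less_iff[OF _ assms] by blast
  moreover have "i - 1 = card {k \<in> upper_subseq n \<sigma>. k < i} + card (lower_left_of_upper (\<sigma> i))"
    using card_interval_less[OF i] card_upper_lower_split[of "\<lambda>k. k < i"]
    by (simp add: lower_left_of_upper_upper[OF assms])
  moreover have "\<sigma> i - 1 = card {k \<in> upper_subseq n \<sigma>. \<sigma> k < \<sigma> i} + card (lower_below_prefix i)"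
    using card_less_value[OF i] card_upper_lower_split[of "\<lambda>k. \<sigma> k < \<sigma> i"]
    by (simp add: lower_below_prefix_upper[OF assms])
  moreover have "1 \<le> i" and "1 \<le> \<sigma> i"
    using i value_in_interval[OF i] by auto
  ultimately show ?thesis
    by (simp add: xcoord_def ycoord_def)
qed

lemma lower_left_of_upper_lower:
  assumes "i \<in> lower_points"
  shows "lower_left_of_upper (\<sigma> i) \<subseteq> {k \<in> lower_points. k < i}"
proof
  fix k
  assume "k \<in> lower_left_of_upper (\<sigma> i)"
  then obtain u where k: "k \<in> lower_points" "k < u" and u: "u \<in> upper_subseq n \<sigma>" "\<sigma> u \<le> \<sigma> i"
    by (auto simp: lower_left_of_upper_def)
  obtain j where j: "j \<in> {1..n}" "j < i" "\<sigma> i < \<sigma> j"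
    using assms lower_points_iff by blast
  have "u \<noteq> i"
    using assms u(1) by (auto simp: lower_points_def)
  moreover have "\<not> i < u"
    using upper_subseqD[OF u(1) j(1)] j(2,3) u(2) by (meson leD less_trans)
  ultimately show "k \<in> {k \<in> lower_points. k < i}"
    using k by simp
qed

lemma lower_upto_subset_lower_below_prefix:
  "{k \<in> lower_points. k \<le> i} \<subseteq> lower_below_prefix i"
  using lower_points_iff unfolding lower_below_prefix_def by fastforce

lemma lower_value_le_position:
  assumes "avoids_321 n \<sigma>" and "i \<in> lower_points"
  shows "\<sigma> i \<le> i"
proof -
  obtain j where j: "j \<in> {1..n}" "j < i" "\<sigma> i < \<sigma> j" and i: "i \<in> {1..n}"
    using assms(2) lower_points_iff by blast
  have "k < i" if k: "k \<in> {1..n}" "\<sigma> k < \<sigma> i" for k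
  proof (rule ccontr)
    assume "\<not> k < i"
    with k(2) have "i < k"
      by (metis le_neq_implies_less less_irrefl not_less)
    then show False
      using assms(1) j k unfolding avoids_321_def by auto
  qed
  then have "{k \<in> {1..n}. \<sigma> k < \<sigma> i} \<subseteq> {k \<in> {1..n}. k < i}"
    by auto
  then have "card {k \<in> {1..n}. \<sigma> k < \<sigma> i} \<le> card {k \<in> {1..n}. k < i}"
    by (intro card_mono) auto
  then have "\<sigma> i - 1 \<le> i - 1"
    using card_less_value[OF i] card_interval_less[OF i] by simp
  then show ?thesis
    using i value_in_interval[OF i] by auto
qed

lemma lower_ycoord_less_xcoord:
  assumes "avoids_321 n \<sigma>" and "i \<in> lower_points"
  shows "ycoord i < xcoord i"
proof -
  have finite_lower: "finite lower_points"
    using finite_subset[OF lower_points_subset] by simp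
  have "card (lower_left_of_upper (\<sigma> i)) \<le> card {k \<in> lower_points. k < i}"
    using lower_left_of_upper_lower[OF assms(2)] finite_lower by (intro card_mono) auto
  also have "\<dots> < card {k \<in> lower_points. k \<le> i}"
    using assms(2) finite_lower by (intro psubset_card_mono) auto
  also have "\<dots> \<le> card (lower_below_prefix i)"
    using lower_upto_subset_lower_below_prefix finite_subset[OF lower_below_prefix_subset]
    by (intro card_mono) auto
  finally show ?thesis
    using lower_value_le_position[OF assms] by (simp add: xcoord_def ycoord_def)
qed

end

theorem lemma2:
  fixes n :: nat and \<sigma> :: "nat \<Rightarrow> nat"
  assumes "\<sigma> permutes {1..n}"
    and "avoids_321 n \<sigma>"
  shows "\<exists>x y :: nat \<Rightarrow> int.
           (\<forall>i \<in> {1..n}. x i \<in> {1..2 * int n} \<and> y i \<in> {1..2 * int n})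
         \<and> (\<forall>i \<in> {1..n}. \<forall>j \<in> {1..n}. x i < x j \<longleftrightarrow> i < j)
         \<and> (\<forall>i \<in> {1..n}. \<forall>j \<in> {1..n}. y i < y j \<longleftrightarrow> \<sigma> i < \<sigma> j)
         \<and> (\<forall>i \<in> upper_subseq n \<sigma>. x i = y i)
         \<and> (\<forall>i \<in> {1..n} - upper_subseq n \<sigma>. y i < x i)"
proof -
  interpret interval_permutation n \<sigma>
    by standard (fact assms(1))
  show ?thesis
    using coords_in_grid xcoord_less_iff ycoord_less_iff upper_coords_eq
      lower_ycoord_less_xcoord[OF assms(2)]
    by (intro exI[of _ xcoord] exI[of _ ycoord]) (auto simp: lower_points_def)
qed

end
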